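(* Let $K\ge 1$ be an integer and let $\mathfrak{L}\subset\mathcal{P}^2_K(X)$ be a $\mathfrak{Q}_L$-clusterable family of mixing measures. Then the mixture model $\mathcal{M}(\mathfrak{L})=\{m(\Lambda):\Lambda\in\mathfrak{L}\}$ is identifiable, i.e. the map $m:\mathfrak{L}\to\mathcal{M}(\mathfrak{L})$, $\Lambda\mapsto m(\Lambda)$, is a bijection onto $\mathcal{M}(\mathfrak{L})$.
   Context: Let $(X,d)$ be a metric space and $\mathcal{P}(X)$ the space of regular Borel probability measures on $X$ with finite $r$-th moments ($r\ge1$), equipped with the Hellinger metric $\rho$. Let $\mathcal{P}^2(X)=\mathcal{P}(\mathcal{P}(X))$ (mixing measures), $\mathcal{P}^2_s(X)=\{\Lambda\in\mathcal{P}^2(X):|\mathrm{supp}(\Lambda)|\le s\}$, and for a family $\mathfrak{Q}\subset\mathcal{P}^2(X)$ write $\mathfrak{Q}_L=\mathfrak{Q}\cap\mathcal{P}^2_L(X)$. For a finitely supported $\Lambda=\sum_{k=1}^K\lambda_k\delta_{\gamma_k}$ define the mixture distribution $m(\Lambda)=\sum_k\lambda_k\gamma_k\in\mathcal{P}(X)$, and $\mathcal{M}(\mathfrak{L})=\{m(\Lambda):\Lambda\in\mathfrak{L}\}$; $\mathcal{M}(\mathfrak{L})$ is identifiable if $m$ is injective on $\mathfrak{L}$. Fix a base family $\mathfrak{Q}\subset\mathcal{P}^2(X)$ such that $\mathcal{M}(\mathfrak{Q}_L)$ is identifiable for each $L$ (e.g. Gaussian mixing measures). For $\Gamma\in\mathcal{P}(X)$,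 $T_L\Gamma$ is the set of $Q\in\mathcal{M}(\mathfrak{Q}_L)$ with $\rho(Q,\Gamma)\le\rho(P,\Gamma)$ for all $P\in\mathcal{M}(\mathfrak{Q}_L)$. When this is a single element $Q^*$, let $\Omega^*=\sum_{\ell=1}^L\omega^*_\ell\delta_{q^*_\ell}\in\mathfrak{Q}_L$ be its (unique) mixing measure; $M_L$ denotes the map $Q^*\mapsto\Omega^*$, and $M_L(\mathfrak{L})=\{M_L(T_L m(\Lambda)):\Lambda\in\mathfrak{L}\}$ (it is assumed $T_Lm(\Lambda)$ is a single element for every $\Lambda\in\mathfrak{L}$). Assignments: $\mathcal{A}_{L\to K}$ is the set of maps $\alpha:[L]\to[K]$; an assignment sequence is a sequence $\{\alpha_L\}$ with $\alpha_L\in\mathcal{A}_{L\to K}$. For $\Omega=\sum_{\ell=1}^L\omega_\ell\delta_{q_\ell}$ and $\alpha\in\mathcal{A}_{L\to K}$ put $\bar\omega_k(\alpha)=\sum_{\ell\in\alpha^{-1}(k)}\omega_\ell$, $\Omega_k(\alpha)=\bar\omega_k(\alpha)^{-1}\sum_{\ell\in\alpha^{-1}(k)}\omega_\ell\delta_{q_\ell}$, $Q_k(\alpha)=m(\Omega_k(\alpha))$, and $\Omega(\alpha)=\sum_{k=1}^K\bar\omega_k(\alpha)\delta_{Q_k(\alpha)}$. Applied to $\Omega^*$ these give $\bar\omega^*_k(\alpha),\Omega^*_k(\alpha),Q^*_k(\alpha)$. Regularity: $\Lambda=\sum_{k=1}^K\lambda_k\delta_{\gamma_k}\in\mathcal{P}^2_K(X)$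 with $\Gamma=m(\Lambda)$ is $\mathfrak{Q}_L$-regular if (a) there is $L_0$ such that $T_L\Gamma$ exists and is unique for all $L\ge L_0$ and $T_L\Gamma\to\Gamma$ (in $\rho$) as $L\to\infty$; and (b) there is an assignment sequence $\{\alpha_L\}$ with $Q^*_k(\alpha_L)\to\gamma_k$ in $\rho$ and $\bar\omega^*_k(\alpha_L)\to\lambda_k$ for all $k$. Assignment sequences satisfying (b) are called $\Lambda$-regular. Clusterability: $\mathfrak{L}\subset\mathcal{P}^2_K(X)$ is $\mathfrak{Q}_L$-clusterable if (a) every $\Lambda\in\mathfrak{L}$ is $\mathfrak{Q}_L$-regular, and (b) there exist functions $\chi_L:M_L(\mathfrak{L})\to\mathcal{A}_{L\to K}$ such that for every $\Lambda\in\mathfrak{L}$, with $\Omega^*_L=M_L(T_Lm(\Lambda))$, the sequence $\{\chi_L(\Omega^*_L)\}$ is $\Lambda$-regular. *)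

theory Defs
  imports "HOL-Probability.Probability"
begin

definition regular_borel :: "'a::metric_space measure \<Rightarrow> bool" where
  "regular_borel M \<longleftrightarrow>
     (\<forall>A\<in>sets M. emeasure M A = (INF U\<in>{U. open U \<and> A \<subseteq> U}. emeasure M U)
               \<and> emeasure M A = (SUP C\<in>{C. closed C \<and> C \<subseteq> A}. emeasure M C))"

definition PX :: "real \<Rightarrow> 'a::metric_space measure set" where
  "PX r = {M. sets M = sets borel \<and> prob_space M \<and> regular_borel M \<and>
              (\<exists>x0. (\<integral>\<^sup>+ x. ennreal (dist x0 x powr r) \<partial>M) < \<infinity>)}"

definition mixL :: "nat set \<Rightarrow> (nat \<Rightarrow> real) \<Rightarrow> (nat \<Rightarrow> 'a::metric_space measure) \<Rightarrow> 'a measure" where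
  "mixL I w q = measure_of UNIV (sets borel) (\<lambda>A. \<Sum>l\<in>I. ennreal (w l) * emeasure (q l) A)"

definition mix :: "'a::metric_space measure pmf \<Rightarrow> 'a measure" where
  "mix \<Lambda> = measure_of UNIV (sets borel)
              (\<lambda>A. \<Sum>\<gamma>\<in>set_pmf \<Lambda>. ennreal (pmf \<Lambda> \<gamma>) * emeasure \<gamma> A)"

definition hellinger :: "'a::metric_space measure \<Rightarrow> 'a measure \<Rightarrow> real" where
  "hellinger P Q =
     (let \<nu> = mixL {0,1} (\<lambda>_. 1/2) (\<lambda>i. if i = 0 then P else Q) in
      sqrt ((1/2) * (\<integral>x. (sqrt (enn2real (RN_deriv \<nu> P x)) - sqrt (enn2real (RN_deriv \<nu> Q x)))\<^sup>2 \<partial>\<nu>)))"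

definition P2 :: "real \<Rightarrow> nat \<Rightarrow> 'a::metric_space measure pmf set" where
  "P2 r s = {\<Lambda>. finite (set_pmf \<Lambda>) \<and> card (set_pmf \<Lambda>) \<le> s \<and> set_pmf \<Lambda> \<subseteq> PX r}"

definition represents :: "real \<Rightarrow> 'a::metric_space measure pmf \<Rightarrow> nat \<Rightarrow> (nat \<Rightarrow> real) \<Rightarrow> (nat \<Rightarrow> 'a measure) \<Rightarrow> bool" where
  "represents r \<Lambda> n w q \<longleftrightarrow> (\<forall>l<n. w l \<ge> 0 \<and> q l \<in> PX r) \<and>
      (\<forall>\<gamma>. pmf \<Lambda> \<gamma> = (\<Sum>l\<in>{l. l < n \<and> q l = \<gamma>}. w l))"

definition rep :: "real \<Rightarrow> nat \<Rightarrow> 'a::metric_space measure pmf \<Rightarrow> (nat \<Rightarrow> real) \<times> (nat \<Rightarrow> 'a measure)" where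
  "rep r L \<Omega> = (SOME (w, q). represents r \<Omega> L w q)"

definition QL :: "real \<Rightarrow> 'a::metric_space measure pmf set \<Rightarrow> nat \<Rightarrow> 'a measure pmf set" where
  "QL r Q L = Q \<inter> P2 r L"

definition TL :: "real \<Rightarrow> 'a::metric_space measure pmf set \<Rightarrow> nat \<Rightarrow> 'a measure \<Rightarrow> 'a measure set" where
  "TL r Q L \<Gamma> = {Q'\<in>mix ` QL r Q L. \<forall>P\<in>mix ` QL r Q L. hellinger Q' \<Gamma> \<le> hellinger P \<Gamma>}"

text \<open>Omega* = M_L(T_L Gamma): the mixing measure of the (unique) projection.\<close>
definition Omega_star :: "real \<Rightarrow> 'a::metric_space measure pmf set \<Rightarrow> nat \<Rightarrow> 'a measure \<Rightarrow> 'a measure pmf" where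
  "Omega_star r Q L \<Gamma> = (THE \<Omega>. \<Omega> \<in> QL r Q L \<and> mix \<Omega> \<in> TL r Q L \<Gamma>)"

definition assignments :: "nat \<Rightarrow> nat \<Rightarrow> (nat \<Rightarrow> nat) set" where
  "assignments L K = {\<alpha>. \<forall>l<L. \<alpha> l < K}"

definition bar_w :: "nat \<Rightarrow> (nat \<Rightarrow> real) \<Rightarrow> (nat \<Rightarrow> nat) \<Rightarrow> nat \<Rightarrow> real" where
  "bar_w L w \<alpha> k = (\<Sum>l\<in>{l. l < L \<and> \<alpha> l = k}. w l)"

definition Q_k :: "nat \<Rightarrow> (nat \<Rightarrow> real) \<Rightarrow> (nat \<Rightarrow> 'a::metric_space measure) \<Rightarrow> (nat \<Rightarrow> nat) \<Rightarrow> nat \<Rightarrow> 'a measure" where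
  "Q_k L w q \<alpha> k = mixL {l. l < L \<and> \<alpha> l = k} (\<lambda>l. w l / bar_w L w \<alpha> k) q"

definition Lambda_regular_seq ::
  "real \<Rightarrow> 'a::metric_space measure pmf set \<Rightarrow> nat \<Rightarrow> 'a measure pmf \<Rightarrow> (nat \<Rightarrow> real) \<Rightarrow> (nat \<Rightarrow> 'a measure)
     \<Rightarrow> (nat \<Rightarrow> nat \<Rightarrow> nat) \<Rightarrow> bool" where
  "Lambda_regular_seq r Q K \<Lambda> lam gam \<alpha>s \<longleftrightarrow>
     (\<forall>L. \<alpha>s L \<in> assignments L K) \<and>
     (\<forall>k<K.
        ((\<lambda>L. let (w, q) = rep r L (Omega_star r Q L (mix \<Lambda>))
              in hellinger (Q_k L w q (\<alpha>s L) k) (gam k)) \<longlonglongrightarrow> 0) \<and>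
        ((\<lambda>L. let (w, q) = rep r L (Omega_star r Q L (mix \<Lambda>))
              in bar_w L w (\<alpha>s L) k) \<longlonglongrightarrow> lam k))"

definition Q_regular ::
  "real \<Rightarrow> 'a::metric_space measure pmf set \<Rightarrow> nat \<Rightarrow> 'a measure pmf \<Rightarrow> (nat \<Rightarrow> real) \<Rightarrow> (nat \<Rightarrow> 'a measure) \<Rightarrow> bool" where
  "Q_regular r Q K \<Lambda> lam gam \<longleftrightarrow>
     represents r \<Lambda> K lam gam \<and>
     (\<exists>L0. (\<forall>L\<ge>L0. \<exists>Q'. TL r Q L (mix \<Lambda>) = {Q'}) \<and>
            ((\<lambda>L. hellinger (THE Q'. TL r Q L (mix \<Lambda>) = {Q'}) (mix \<Lambda>)) \<longlonglongrightarrow> 0)) \<and>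
     (\<exists>\<alpha>s. Lambda_regular_seq r Q K \<Lambda> lam gam \<alpha>s)"

text \<open>Clusterability: chi L acts on Omega*_L (whose labelling is given by rep).\<close>
definition Q_clusterable :: "real \<Rightarrow> 'a::metric_space measure pmf set \<Rightarrow> nat \<Rightarrow> 'a measure pmf set \<Rightarrow> bool" where
  "Q_clusterable r Q K \<LL> \<longleftrightarrow>
     (\<exists>(chi :: nat \<Rightarrow> 'a measure pmf \<Rightarrow> nat \<Rightarrow> nat).
        \<forall>\<Lambda>\<in>\<LL>. \<exists>lam gam. Q_regular r Q K \<Lambda> lam gam \<and>
           Lambda_regular_seq r Q K \<Lambda> lam gam (\<lambda>L. chi L (Omega_star r Q L (mix \<Lambda>))))"

end

theory Submission
  imports Defs
begin

text \<open>If \<open>m(\<Lambda>\<^sub>1) = m(\<Lambda>\<^sub>2)\<close>, the two mixing measures have the same projections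
  \<open>\<Omega>\<^sup>*\<^sub>L\<close>, hence the same clustering \<open>\<chi>\<^sub>L(\<Omega>\<^sup>*\<^sub>L)\<close> and the same cluster
  weights and cluster mixtures \<open>Q\<^sup>*\<^sub>k(\<alpha>\<^sub>L)\<close>. Regularity says these converge to the atoms
  and weights of \<open>\<Lambda>\<^sub>1\<close> and of \<open>\<Lambda>\<^sub>2\<close> alike, so it only remains to see that limits are
  unique: for weights this is clear, and for Hellinger limits it follows from the bound
  \<open>|A(S) - B(S)| \<le> \<rho>(A,B)\<^sup>2/\<epsilon> + \<epsilon>(A(X) + B(X))\<close>, which comes from
  \<open>|p - q| = |\<surd>p - \<surd>q|(\<surd>p + \<surd>q)\<close> and Young's inequality applied to the densities.\<close>

lemma sets_mixL [simp]: "sets (mixL I w q) = sets borel"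
  unfolding mixL_def by (metis sets.sigma_sets_eq sets_measure_of space_borel sets.space_closed)

lemma space_mixL [simp]: "space (mixL I w q) = UNIV"
  using sets_eq_imp_space_eq[OF sets_mixL] by simp

lemma emeasure_mixL:
  assumes "finite I" "\<And>l. l \<in> I \<Longrightarrow> sets (q l) = sets borel" "S \<in> sets borel"
  shows "emeasure (mixL I w q) S = (\<Sum>l\<in>I. ennreal (w l) * emeasure (q l) S)"
  unfolding mixL_def
proof (rule emeasure_measure_of_sigma)
  show "sigma_algebra UNIV (sets borel)"
    by (metis sets.sigma_algebra_axioms space_borel)
  show "positive (sets borel) (\<lambda>A. \<Sum>l\<in>I. ennreal (w l) * emeasure (q l) A)"
    unfolding positive_def by simp
  show "countably_additive (sets borel) (\<lambda>A. \<Sum>l\<in>I. ennreal (w l) * emeasure (q l) A)"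
    unfolding countably_additive_def
  proof (intro allI impI)
    fix A :: "nat \<Rightarrow> 'a set"
    assume A: "range A \<subseteq> sets borel" "disjoint_family A"
    have "(\<Sum>i. \<Sum>l\<in>I. ennreal (w l) * emeasure (q l) (A i))
        = (\<Sum>l\<in>I. \<Sum>i. ennreal (w l) * emeasure (q l) (A i))"
      by (rule suminf_sum) (rule summableI)
    also have "\<dots> = (\<Sum>l\<in>I. ennreal (w l) * emeasure (q l) (\<Union>i. A i))"
    proof (rule sum.cong[OF refl])
      fix l assume "l \<in> I"
      then have "range A \<subseteq> sets (q l)" using A assms(2) by auto
      then show "(\<Sum>i. ennreal (w l) * emeasure (q l) (A i)) = ennreal (w l) * emeasure (q l) (\<Union>i. A i)"
        using suminf_emeasure[of A "q l"] A by simp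
    qed
    finally show "(\<Sum>i. \<Sum>l\<in>I. ennreal (w l) * emeasure (q l) (A i)) =
       (\<Sum>l\<in>I. ennreal (w l) * emeasure (q l) (\<Union> (range A)))" .
  qed
qed (fact)

lemma abs_diff_le_sqrt_diff_sq:
  fixes p q e :: real
  assumes "p \<ge> 0" "q \<ge> 0" "e > 0"
  shows "\<bar>p - q\<bar> \<le> (sqrt p - sqrt q)\<^sup>2 / (2*e) + e * (p + q)"
proof -
  define a b where "a = sqrt p" and "b = sqrt q"
  have ab: "a \<ge> 0" "b \<ge> 0" "p = a\<^sup>2" "q = b\<^sup>2" using assms by (auto simp: a_def b_def)
  have young: "2*e*(\<bar>a - b\<bar>*(a + b)) \<le> (a - b)\<^sup>2 + e\<^sup>2 * (a + b)\<^sup>2"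
  proof -
    have "0 \<le> (\<bar>a - b\<bar> - e*(a + b))\<^sup>2" by simp
    also have "\<dots> = (a - b)\<^sup>2 + e\<^sup>2 * (a + b)\<^sup>2 - 2*e*(\<bar>a - b\<bar>*(a + b))"
      by (simp add: power2_diff power_mult_distrib power2_eq_square algebra_simps)
    finally show ?thesis by simp
  qed
  have "\<bar>p - q\<bar> = \<bar>a - b\<bar> * (a + b)"
  proof -
    have "p - q = (a - b) * (a + b)" using ab by (simp add: power2_eq_square algebra_simps)
    then show ?thesis using ab by (simp add: abs_mult)
  qed
  also have "\<dots> \<le> (a - b)\<^sup>2 / (2*e) + e * (a + b)\<^sup>2 / 2"
    using young assms(3) by (simp add: field_simps power2_eq_square)
  also have "\<dots> \<le> (a - b)\<^sup>2 / (2*e) + e * (p + q)"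
    using ab assms(3) sum_power2_ge_zero[of "a - b" 0]
    by (simp add: power2_diff power2_sum)
  finally show ?thesis by (simp add: a_def b_def)
qed

definition hellinger_ref :: "'a::metric_space measure \<Rightarrow> 'a measure \<Rightarrow> 'a measure" where
  "hellinger_ref P Q = mixL {0,1} (\<lambda>_. 1/2) (\<lambda>i. if i = 0 then P else Q)"

lemma hellinger_altdef:
  "hellinger P Q = sqrt ((1/2) * (\<integral>x. (sqrt (enn2real (RN_deriv (hellinger_ref P Q) P x))
      - sqrt (enn2real (RN_deriv (hellinger_ref P Q) Q x)))\<^sup>2 \<partial>hellinger_ref P Q))"
  unfolding hellinger_def hellinger_ref_def Let_def ..

lemma hellinger_nonneg: "hellinger P Q \<ge> 0"
  unfolding hellinger_def Let_def by simp

lemma sets_hellinger_ref [simp]: "sets (hellinger_ref P Q) = sets borel"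
  and space_hellinger_ref [simp]: "space (hellinger_ref P Q) = UNIV"
  by (simp_all add: hellinger_ref_def)

lemma emeasure_hellinger_ref:
  assumes "sets P = sets borel" "sets Q = sets borel" "X \<in> sets borel"
  shows "emeasure (hellinger_ref P Q) X = ennreal (1/2) * emeasure P X + ennreal (1/2) * emeasure Q X"
  using emeasure_mixL[where I="{0,1}" and w="\<lambda>_. 1/2" and q="\<lambda>i. if i = 0 then P else Q"] assms
  by (simp add: hellinger_ref_def)

lemma finite_measure_hellinger_ref:
  assumes "sets P = sets borel" "sets Q = sets borel" "finite_measure P" "finite_measure Q"
  shows "finite_measure (hellinger_ref P Q)"
proof (rule finite_measureI)
  have "space P = UNIV" "space Q = UNIV"
    using assms(1,2) by (simp_all add: sets_eq_imp_space_eq)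
  then have "emeasure P UNIV \<noteq> \<infinity>" "emeasure Q UNIV \<noteq> \<infinity>"
    using assms(3,4) by (simp_all add: finite_measure.emeasure_finite)
  then show "emeasure (hellinger_ref P Q) (space (hellinger_ref P Q)) \<noteq> \<infinity>"
    using emeasure_hellinger_ref[OF assms(1,2)] by (simp add: ennreal_mult_eq_top_iff)
qed

lemma absolutely_continuous_hellinger_ref:
  assumes "sets P = sets borel" "sets Q = sets borel"
  shows "absolutely_continuous (hellinger_ref P Q) P \<and> absolutely_continuous (hellinger_ref P Q) Q"
  unfolding absolutely_continuous_def
proof (intro conjI subsetI)
  fix X assume "X \<in> null_sets (hellinger_ref P Q)"
  then have X: "X \<in> sets borel" "emeasure (hellinger_ref P Q) X = 0" by auto
  then have "emeasure P X = 0 \<and> emeasure Q X = 0"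
    using emeasure_hellinger_ref[OF assms X(1)] by (simp add: ennreal_mult_eq_top_iff)
  then show "X \<in> null_sets P" "X \<in> null_sets Q" using assms X(1) by auto
qed

lemma measure_diff_le_hellinger:
  fixes A B :: "'a::metric_space measure"
  assumes sA: "sets A = sets borel" and sB: "sets B = sets borel"
    and fA: "finite_measure A" and fB: "finite_measure B"
    and S: "S \<in> sets borel" and e: "e > 0"
  shows "\<bar>measure A S - measure B S\<bar> \<le> (hellinger A B)\<^sup>2 / e + e * (measure A UNIV + measure B UNIV)"
proof -
  define \<nu> where "\<nu> = hellinger_ref A B"
  interpret A: finite_measure A by fact
  interpret B: finite_measure B by fact
  interpret \<nu>: finite_measure \<nu>
    unfolding \<nu>_def by (rule finite_measure_hellinger_ref[OF sA sB fA fB])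
  have ac: "absolutely_continuous \<nu> A" "absolutely_continuous \<nu> B"
    using absolutely_continuous_hellinger_ref[OF sA sB] by (simp_all add: \<nu>_def)
  have sets_eq: "sets A = sets \<nu>" "sets B = sets \<nu>" using sA sB by (simp_all add: \<nu>_def)
  define p1 p2 where "p1 = (\<lambda>x. enn2real (RN_deriv \<nu> A x))" and "p2 = (\<lambda>x. enn2real (RN_deriv \<nu> B x))"
  have [measurable]: "p1 \<in> borel_measurable \<nu>" "p2 \<in> borel_measurable \<nu>"
    by (simp_all add: p1_def p2_def)
  have nonneg: "p1 x \<ge> 0" "p2 x \<ge> 0" for x by (simp_all add: p1_def p2_def)
  have intA: "integral\<^sup>L A f = (\<integral>x. p1 x * f x \<partial>\<nu>)" "integrable A f = integrable \<nu> (\<lambda>x. p1 x * f x)"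
    and intB: "integral\<^sup>L B f = (\<integral>x. p2 x * f x \<partial>\<nu>)" "integrable B f = integrable \<nu> (\<lambda>x. p2 x * f x)"
    if "f \<in> borel_measurable \<nu>" for f :: "'a \<Rightarrow> real"
    using \<nu>.RN_deriv_integral[OF A.sigma_finite_measure ac(1) sets_eq(1) that]
      \<nu>.RN_deriv_integrable[OF A.sigma_finite_measure ac(1) sets_eq(1) that]
      \<nu>.RN_deriv_integral[OF B.sigma_finite_measure ac(2) sets_eq(2) that]
      \<nu>.RN_deriv_integrable[OF B.sigma_finite_measure ac(2) sets_eq(2) that]
    by (auto simp: p1_def p2_def)
  have int_p: "integrable \<nu> p1" "integrable \<nu> p2"
    using intA(2)[of "\<lambda>_. 1"] intB(2)[of "\<lambda>_. 1"] by simp_all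
  have int_pS: "integrable \<nu> (\<lambda>x. p1 x * indicator S x)" "integrable \<nu> (\<lambda>x. p2 x * indicator S x)"
    using S int_p by (auto simp: \<nu>_def intro!: integrable_real_mult_indicator)
  have space: "space A = UNIV" "space B = UNIV" "space \<nu> = UNIV"
    using sA sB by (simp_all add: sets_eq_imp_space_eq \<nu>_def)
  have mass: "measure A UNIV = (\<integral>x. p1 x \<partial>\<nu>)" "measure B UNIV = (\<integral>x. p2 x \<partial>\<nu>)"
    using intA(1)[of "\<lambda>_. 1"] intB(1)[of "\<lambda>_. 1"] space by simp_all
  have "measure A S = (\<integral>x. p1 x * indicator S x \<partial>\<nu>)" "measure B S = (\<integral>x. p2 x * indicator S x \<partial>\<nu>)"
  proof -
    have ind: "indicator S \<in> borel_measurable \<nu>"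
      using S by (intro borel_measurable_indicator) (simp add: \<nu>_def)
    show "measure A S = (\<integral>x. p1 x * indicator S x \<partial>\<nu>)" "measure B S = (\<integral>x. p2 x * indicator S x \<partial>\<nu>)"
      using intA(1)[OF ind] intB(1)[OF ind] S sA sB by auto
  qed
  then have "measure A S - measure B S = (\<integral>x. (p1 x - p2 x) * indicator S x \<partial>\<nu>)"
    using int_pS by (simp add: left_diff_distrib)
  define D where "D = (\<lambda>x. (sqrt (p1 x) - sqrt (p2 x))\<^sup>2)"
  have int_D: "integrable \<nu> D"
  proof (rule Bochner_Integration.integrable_bound[of _ "\<lambda>x. p1 x + p2 x"])
    show "integrable \<nu> (\<lambda>x. p1 x + p2 x)" using int_p by simp
    show "AE x in \<nu>. norm (D x) \<le> norm (p1 x + p2 x)"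
    proof (rule AE_I2)
      fix x
      have "(sqrt (p1 x) - sqrt (p2 x))\<^sup>2 \<le> p1 x + p2 x"
        using nonneg[of x] by (simp add: power2_diff)
      then show "norm (D x) \<le> norm (p1 x + p2 x)" using nonneg[of x] by (simp add: D_def)
    qed
  qed (simp add: D_def)
  have hellinger_sq: "(hellinger A B)\<^sup>2 = (1/2) * (\<integral>x. D x \<partial>\<nu>)"
    using integral_nonneg_AE[of D \<nu>]
    by (simp add: hellinger_altdef D_def p1_def p2_def \<nu>_def)
  have "\<bar>measure A S - measure B S\<bar> \<le> (\<integral>x. \<bar>(p1 x - p2 x) * indicator S x\<bar> \<partial>\<nu>)"
    using \<open>measure A S - measure B S = _\<close> integral_norm_bound[of \<nu> "\<lambda>x. (p1 x - p2 x) * indicator S x"]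
    by simp
  also have "\<dots> \<le> (\<integral>x. D x / (2*e) + e * (p1 x + p2 x) \<partial>\<nu>)"
  proof (rule integral_mono)
    show "integrable \<nu> (\<lambda>x. \<bar>(p1 x - p2 x) * indicator S x\<bar>)"
      using int_pS by (simp add: left_diff_distrib)
    show "integrable \<nu> (\<lambda>x. D x / (2*e) + e * (p1 x + p2 x))"
      using int_D int_p by simp
    fix x
    have "\<bar>(p1 x - p2 x) * indicator S x\<bar> \<le> \<bar>p1 x - p2 x\<bar>" by (simp add: indicator_def)
    also have "\<dots> \<le> D x / (2*e) + e * (p1 x + p2 x)"
      unfolding D_def by (rule abs_diff_le_sqrt_diff_sq[OF nonneg e])
    finally show "\<bar>(p1 x - p2 x) * indicator S x\<bar> \<le> D x / (2*e) + e * (p1 x + p2 x)" .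
  qed
  also have "\<dots> = (hellinger A B)\<^sup>2 / e + e * (measure A UNIV + measure B UNIV)"
    unfolding mass hellinger_sq using int_D int_p by simp
  finally show ?thesis .
qed

lemma measure_diff_le_hellinger_prob_space:
  fixes A B :: "'a::metric_space measure"
  assumes sA: "sets A = sets borel" and sB: "sets B = sets borel"
    and fA: "finite_measure A" and pB: "prob_space B"
    and S: "S \<in> sets borel" and e: "e > 0" and h: "hellinger A B \<le> 1"
  shows "\<bar>measure A S - measure B S\<bar> \<le> (hellinger A B)\<^sup>2 / e + 8 * e"
proof -
  have fB: "finite_measure B" using pB by (rule prob_space.axioms(1))
  have mass_B: "measure B UNIV = 1"
    using prob_space.prob_space[OF pB] sets_eq_imp_space_eq[OF sB] by simp
  have h_sq: "(hellinger A B)\<^sup>2 \<le> 1" using hellinger_nonneg h by (rule power_le_one)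
  have "\<bar>measure A UNIV - 1\<bar> \<le> 2 * (hellinger A B)\<^sup>2 + (measure A UNIV + 1) / 2"
    using measure_diff_le_hellinger[OF sA sB fA fB _, of UNIV "1/2"] mass_B by simp
  then have "measure A UNIV - 1 \<le> 2 * (hellinger A B)\<^sup>2 + (measure A UNIV + 1) / 2"
    by (rule abs_le_D1)
  then have "measure A UNIV \<le> 7" using h_sq by argo
  then have "e * (measure A UNIV + 1) \<le> 8 * e" using e by simp
  then show ?thesis
    using measure_diff_le_hellinger[OF sA sB fA fB S e] mass_B by simp
qed

lemma hellinger_limit_unique:
  fixes A :: "nat \<Rightarrow> 'a::metric_space measure" and B C :: "'a measure"
  assumes sB: "sets B = sets borel" and sC: "sets C = sets borel"
    and pB: "prob_space B" and pC: "prob_space C"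
    and finite: "eventually (\<lambda>n. sets (A n) = sets borel \<and> finite_measure (A n)) sequentially"
    and hB: "(\<lambda>n. hellinger (A n) B) \<longlonglongrightarrow> 0"
    and hC: "(\<lambda>n. hellinger (A n) C) \<longlonglongrightarrow> 0"
  shows "B = C"
proof -
  have small: "\<bar>measure B S - measure C S\<bar> \<le> 16 * e" if S: "S \<in> sets borel" and e: "e > 0" for S e
  proof (rule tendsto_lowerbound)
    show "(\<lambda>n. ((hellinger (A n) B)\<^sup>2 + (hellinger (A n) C)\<^sup>2) / e + 16 * e) \<longlonglongrightarrow> 16 * e"
      using e hB hC by (auto intro!: tendsto_eq_intros)
    have "eventually (\<lambda>n. hellinger (A n) B \<le> 1 \<and> hellinger (A n) C \<le> 1) sequentially"
      using order_tendstoD(2)[OF hB zero_less_one] order_tendstoD(2)[OF hC zero_less_one]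
      by eventually_elim auto
    with finite show "eventually (\<lambda>n. \<bar>measure B S - measure C S\<bar>
        \<le> ((hellinger (A n) B)\<^sup>2 + (hellinger (A n) C)\<^sup>2) / e + 16 * e) sequentially"
    proof eventually_elim
      case (elim n)
      then have "\<bar>measure (A n) S - measure B S\<bar> \<le> (hellinger (A n) B)\<^sup>2 / e + 8 * e"
        and "\<bar>measure (A n) S - measure C S\<bar> \<le> (hellinger (A n) C)\<^sup>2 / e + 8 * e"
        using measure_diff_le_hellinger_prob_space[OF _ sB _ pB S e]
          measure_diff_le_hellinger_prob_space[OF _ sC _ pC S e] by blast+
      then show ?case unfolding add_divide_distrib abs_le_iff by linarith
    qed
  qed simp
  have eq: "measure B S = measure C S" if "S \<in> sets borel" for S
    using small[OF that, of "\<bar>measure B S - measure C S\<bar> / 32"] by (cases "measure B S = measure C S") auto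
  show ?thesis
  proof (rule measure_eqI)
    fix S assume "S \<in> sets B"
    then show "emeasure B S = emeasure C S"
      using eq sB finite_measure.emeasure_eq_measure[OF prob_space.axioms(1)[OF pB]]
        finite_measure.emeasure_eq_measure[OF prob_space.axioms(1)[OF pC]] by simp
  qed (simp add: sB sC)
qed

lemma PX_sets_prob_space: "M \<in> PX r \<Longrightarrow> sets M = sets borel \<and> prob_space M"
  unfolding PX_def by auto

lemma Omega_star_in_QL:
  assumes inj: "inj_on mix (QL r Q L)" and T: "TL r Q L \<Gamma> = {Q'}"
  shows "Omega_star r Q L \<Gamma> \<in> QL r Q L"
proof -
  have "Q' \<in> mix ` QL r Q L" using T unfolding TL_def by auto
  then obtain \<Omega> where \<Omega>: "\<Omega> \<in> QL r Q L" "mix \<Omega> = Q'" by blast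
  have "Omega_star r Q L \<Gamma> = \<Omega>"
    unfolding Omega_star_def
  proof (rule the_equality)
    show "\<Omega> \<in> QL r Q L \<and> mix \<Omega> \<in> TL r Q L \<Gamma>" using \<Omega> T by simp
    fix \<Omega>' assume "\<Omega>' \<in> QL r Q L \<and> mix \<Omega>' \<in> TL r Q L \<Gamma>"
    then show "\<Omega>' = \<Omega>" using \<Omega> T inj_onD[OF inj] by auto
  qed
  with \<Omega> show ?thesis by simp
qed

lemma represents_exists:
  assumes "\<Omega> \<in> P2 r L"
  shows "\<exists>w q. represents r \<Omega> L w q"
proof -
  define S where "S = set_pmf \<Omega>"
  define c where "c = card S"
  have fin: "finite S" and "c \<le> L" and "S \<subseteq> PX r"
    using assms by (auto simp: P2_def S_def c_def)
  obtain f where f: "bij_betw f {0..<c} S"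
    using ex_bij_betw_nat_finite[OF fin] by (auto simp: c_def)
  have "c > 0" using fin set_pmf_not_empty by (simp add: S_def c_def card_gt_0_iff)
  define q where "q l = (if l < c then f l else f 0)" for l
  define w where "w l = (if l < c then pmf \<Omega> (f l) else 0)" for l
  have fS: "l < c \<Longrightarrow> f l \<in> S" for l using f by (auto simp: bij_betw_def)
  have "represents r \<Omega> L w q"
    unfolding represents_def
  proof (intro conjI allI impI)
    fix l
    show "0 \<le> w l" by (simp add: w_def)
    show "q l \<in> PX r" using fS \<open>c > 0\<close> \<open>S \<subseteq> PX r\<close> by (auto simp: q_def)
  next
    fix \<gamma>
    have "(\<Sum>l\<in>{l. l < L \<and> q l = \<gamma>}. w l) = (\<Sum>l\<in>{l. l < c \<and> f l = \<gamma>}. w l)"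
      by (rule sum.mono_neutral_right) (use \<open>c \<le> L\<close> in \<open>auto simp: q_def w_def\<close>)
    also have "\<dots> = pmf \<Omega> \<gamma>"
    proof (cases "\<gamma> \<in> S")
      case True
      then obtain j where j: "j < c" "f j = \<gamma>" using bij_betw_imp_surj_on[OF f] by auto
      then have "{l. l < c \<and> f l = \<gamma>} = {j}" using f by (auto simp: bij_betw_def inj_on_def)
      then show ?thesis using j by (simp add: w_def)
    next
      case False
      then have no_l: "{l. l < c \<and> f l = \<gamma>} = {}" using fS by auto
      show ?thesis unfolding no_l using False by (simp add: S_def set_pmf_iff)
    qed
    finally show "pmf \<Omega> \<gamma> = (\<Sum>l\<in>{l. l < L \<and> q l = \<gamma>}. w l)" by simp
  qed
  then show ?thesis by blast
qed

lemma represents_rep: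
  assumes "\<Omega> \<in> P2 r L"
  shows "represents r \<Omega> L (fst (rep r L \<Omega>)) (snd (rep r L \<Omega>))"
proof -
  have "\<exists>x. (\<lambda>(w, q). represents r \<Omega> L w q) x" using represents_exists[OF assms] by auto
  then have "(\<lambda>(w, q). represents r \<Omega> L w q) (rep r L \<Omega>)" unfolding rep_def by (rule someI_ex)
  then show ?thesis by (simp add: case_prod_beta)
qed

lemma Q_k_finite_measure:
  assumes "represents r \<Omega> L w q"
  shows "sets (Q_k L w q \<alpha> k) = sets borel \<and> finite_measure (Q_k L w q \<alpha> k)"
proof
  show "sets (Q_k L w q \<alpha> k) = sets borel" by (simp add: Q_k_def)
  define I where "I = {l. l < L \<and> \<alpha> l = k}"
  have q: "sets (q l) = sets borel \<and> prob_space (q l)" if "l \<in> I" for l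
    using assms that PX_sets_prob_space by (auto simp: represents_def I_def)
  then have unit: "emeasure (q l) UNIV = 1" if "l \<in> I" for l
    using prob_space.emeasure_space_1[of "q l"] sets_eq_imp_space_eq[of "q l" borel] that by simp
  have "emeasure (Q_k L w q \<alpha> k) (space (Q_k L w q \<alpha> k))
      = (\<Sum>l\<in>I. ennreal (w l / bar_w L w \<alpha> k) * emeasure (q l) UNIV)"
    unfolding Q_k_def I_def[symmetric] space_mixL
    by (rule emeasure_mixL) (use q in \<open>auto simp: I_def\<close>)
  also have "\<dots> = (\<Sum>l\<in>I. ennreal (w l / bar_w L w \<alpha> k))" using unit by simp
  also have "\<dots> \<noteq> \<infinity>" by (simp add: I_def)
  finally show "finite_measure (Q_k L w q \<alpha> k)" by (rule finite_measureI)
qed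

lemma Lambda_regular_seq_limits_unique:
  assumes inj: "\<And>L. inj_on mix (QL r Q L)"
    and unique: "\<forall>L\<ge>L0. \<exists>Q'. TL r Q L (mix \<Lambda>\<^sub>1) = {Q'}"
    and mix_eq: "mix \<Lambda>\<^sub>1 = mix \<Lambda>\<^sub>2"
    and seq\<^sub>1: "Lambda_regular_seq r Q K \<Lambda>\<^sub>1 lam\<^sub>1 gam\<^sub>1 \<alpha>s"
    and seq\<^sub>2: "Lambda_regular_seq r Q K \<Lambda>\<^sub>2 lam\<^sub>2 gam\<^sub>2 \<alpha>s"
    and k: "k < K" and gam: "gam\<^sub>1 k \<in> PX r" "gam\<^sub>2 k \<in> PX r"
  shows "lam\<^sub>1 k = lam\<^sub>2 k \<and> gam\<^sub>1 k = gam\<^sub>2 k"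
proof
  define R where "R L = rep r L (Omega_star r Q L (mix \<Lambda>\<^sub>1))" for L
  define A where "A L = Q_k L (fst (R L)) (snd (R L)) (\<alpha>s L) k" for L
  define B where "B L = bar_w L (fst (R L)) (\<alpha>s L) k" for L
  have lim\<^sub>1: "(\<lambda>L. hellinger (A L) (gam\<^sub>1 k)) \<longlonglongrightarrow> 0" "B \<longlonglongrightarrow> lam\<^sub>1 k"
    using seq\<^sub>1 k unfolding Lambda_regular_seq_def A_def B_def R_def by (simp_all add: case_prod_beta)
  have lim\<^sub>2: "(\<lambda>L. hellinger (A L) (gam\<^sub>2 k)) \<longlonglongrightarrow> 0" "B \<longlonglongrightarrow> lam\<^sub>2 k"
    using seq\<^sub>2 k unfolding Lambda_regular_seq_def A_def B_def R_def mix_eq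
    by (simp_all add: case_prod_beta)
  show "lam\<^sub>1 k = lam\<^sub>2 k" using lim\<^sub>1(2) lim\<^sub>2(2) by (rule LIMSEQ_unique)
  have "eventually (\<lambda>L. sets (A L) = sets borel \<and> finite_measure (A L)) sequentially"
    unfolding eventually_sequentially
  proof (intro exI allI impI)
    fix L assume "L \<ge> L0"
    then have "Omega_star r Q L (mix \<Lambda>\<^sub>1) \<in> P2 r L"
      using unique Omega_star_in_QL[OF inj] unfolding QL_def by blast
    then show "sets (A L) = sets borel \<and> finite_measure (A L)"
      unfolding A_def R_def by (rule Q_k_finite_measure[OF represents_rep])
  qed
  then show "gam\<^sub>1 k = gam\<^sub>2 k"
    using hellinger_limit_unique lim\<^sub>1(1) lim\<^sub>2(1) PX_sets_prob_space[OF gam(1)] PX_sets_prob_space[OF gam(2)]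
    by blast
qed

lemma pmf_eqI_represents:
  assumes "represents r \<Lambda>\<^sub>1 K lam\<^sub>1 gam\<^sub>1" "represents r \<Lambda>\<^sub>2 K lam\<^sub>2 gam\<^sub>2"
    and "\<And>k. k < K \<Longrightarrow> lam\<^sub>1 k = lam\<^sub>2 k \<and> gam\<^sub>1 k = gam\<^sub>2 k"
  shows "\<Lambda>\<^sub>1 = \<Lambda>\<^sub>2"
proof (rule pmf_eqI)
  fix \<gamma>
  have "{k. k < K \<and> gam\<^sub>1 k = \<gamma>} = {k. k < K \<and> gam\<^sub>2 k = \<gamma>}" using assms(3) by auto
  then have "(\<Sum>k\<in>{k. k < K \<and> gam\<^sub>1 k = \<gamma>}. lam\<^sub>1 k) = (\<Sum>k\<in>{k. k < K \<and> gam\<^sub>2 k = \<gamma>}. lam\<^sub>2 k)"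
    using assms(3) by (intro sum.cong) auto
  then show "pmf \<Lambda>\<^sub>1 \<gamma> = pmf \<Lambda>\<^sub>2 \<gamma>" using assms(1,2) unfolding represents_def by simp
qed

theorem theorem1:
  fixes r :: real and K :: nat
    and Q :: "'a::metric_space measure pmf set"
    and \<LL> :: "'a measure pmf set"
  assumes "r \<ge> 1"
    and "\<And>L. inj_on mix (QL r Q L)"
    and "K \<ge> 1"
    and "\<LL> \<subseteq> P2 r K"
    and "Q_clusterable r Q K \<LL>"
  shows "bij_betw mix \<LL> (mix ` \<LL>)"
proof (rule bij_betw_imageI)
  obtain chi :: "nat \<Rightarrow> 'a measure pmf \<Rightarrow> nat \<Rightarrow> nat" where chi:
    "\<And>\<Lambda>. \<Lambda> \<in> \<LL> \<Longrightarrow> \<exists>lam gam. Q_regular r Q K \<Lambda> lam gam \<and>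
           Lambda_regular_seq r Q K \<Lambda> lam gam (\<lambda>L. chi L (Omega_star r Q L (mix \<Lambda>)))"
    using assms(5) unfolding Q_clusterable_def by blast
  show "inj_on mix \<LL>"
  proof (rule inj_onI)
    fix \<Lambda>\<^sub>1 \<Lambda>\<^sub>2 assume "\<Lambda>\<^sub>1 \<in> \<LL>" "\<Lambda>\<^sub>2 \<in> \<LL>" and mix_eq: "mix \<Lambda>\<^sub>1 = mix \<Lambda>\<^sub>2"
    obtain lam\<^sub>1 gam\<^sub>1 lam\<^sub>2 gam\<^sub>2 where
      reg\<^sub>1: "Q_regular r Q K \<Lambda>\<^sub>1 lam\<^sub>1 gam\<^sub>1" and reg\<^sub>2: "Q_regular r Q K \<Lambda>\<^sub>2 lam\<^sub>2 gam\<^sub>2" and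
      seq\<^sub>1: "Lambda_regular_seq r Q K \<Lambda>\<^sub>1 lam\<^sub>1 gam\<^sub>1 (\<lambda>L. chi L (Omega_star r Q L (mix \<Lambda>\<^sub>1)))" and
      seq\<^sub>2: "Lambda_regular_seq r Q K \<Lambda>\<^sub>2 lam\<^sub>2 gam\<^sub>2 (\<lambda>L. chi L (Omega_star r Q L (mix \<Lambda>\<^sub>1)))"
      using chi[OF \<open>\<Lambda>\<^sub>1 \<in> \<LL>\<close>] chi[OF \<open>\<Lambda>\<^sub>2 \<in> \<LL>\<close>] unfolding mix_eq by blast
    obtain L0 where unique: "\<forall>L\<ge>L0. \<exists>Q'. TL r Q L (mix \<Lambda>\<^sub>1) = {Q'}"
      and rep\<^sub>1: "represents r \<Lambda>\<^sub>1 K lam\<^sub>1 gam\<^sub>1"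
      using reg\<^sub>1 unfolding Q_regular_def by blast
    have rep\<^sub>2: "represents r \<Lambda>\<^sub>2 K lam\<^sub>2 gam\<^sub>2" using reg\<^sub>2 unfolding Q_regular_def by blast
    have "lam\<^sub>1 k = lam\<^sub>2 k \<and> gam\<^sub>1 k = gam\<^sub>2 k" if "k < K" for k
      using Lambda_regular_seq_limits_unique[OF assms(2) unique mix_eq seq\<^sub>1 seq\<^sub>2 that] rep\<^sub>1 rep\<^sub>2 that
      unfolding represents_def by blast
    then show "\<Lambda>\<^sub>1 = \<Lambda>\<^sub>2" using pmf_eqI_represents[OF rep\<^sub>1 rep\<^sub>2] by blast
  qed
qed simp

end
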